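(* Given a quantum circuit $\mathcal C$ and its associated packet sequence $\Omega=(\mathcal{P}_1,\dots,\mathcal{P}_m)$, if $\Gamma=(\mathcal{Q}_1,\dots,\mathcal{Q}_{\ell})$ with $\ell < m$ is a packing sequence constructed from $\Omega$ by merging packets then $\mathcal D(\Gamma)\leq \mathcal D(\Omega)$ for every possible qubit allocation map $\mathcal{A}$.
   Context: Gates are drawn from $S=\{CU\mid U\in \mathbb{U}(2)\}\cup \mathbb{SU}(2)$. A gate packet $\mathcal P$ on sub-register $R_\mathcal P$ rooted on qubit $q$ is a sequence of consecutive gates where every controlled gate is controlled by $q$, every single-qubit gate on $q$ is diagonal or anti-diagonal, and every qubit of $R_\mathcal P\setminus\{q\}$ is targeted by some controlled gate of $\mathcal P$; its unitary has the form $(|0\rangle\langle 0|\cdot D)\otimes A+(|1\rangle\langle 1|\cdot D)\otimes B$ with $D\in\{I,X\}$ and $A,B$ tensor products of single-qubit unitaries. An allocation map is $\mathcal A:R\to L$ assigning each qubit to a QPU. A packing sequence $\Omega_\mathcal C=(\mathcal P_1,\dots,\mathcal P_m)$ is a sequence of gate packets such that every gate of $\mathcal C$ belongs to a unique packet and $\mathcal C$ is recovered from $\Omega_\mathcal C$ by adding single-qubit gates between its elements. The distribution cost is $\mathcal D(\Omega_\mathcal C)=\sum_{\mathcal P\in\Omega_\mathcal C}[|\mathcal A(R_\mathcal P)|-1]$ where $\mathcal A(R_\mathcal P)=\{\mathcal A(q):q\in R_\mathcal P\}$. Two adjacent packets $\mathcal P_i,\mathcal P_{i+1}$ rooted on the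 same control qubit can be merged into a single packet $\mathcal P_i\cdot\mathcal P_{i+1}$. *)

theory Defs
  imports "HOL-Analysis.Analysis"
begin

type_synonym cmat2 = "complex ^ 2 ^ 2"

definition adj2 :: "cmat2 \<Rightarrow> cmat2" where
  "adj2 U = (\<chi> i j. cnj (U $ j $ i))"

definition unitary2 :: "cmat2 \<Rightarrow> bool" where
  "unitary2 U \<longleftrightarrow> U ** adj2 U = mat 1"

definition special_unitary2 :: "cmat2 \<Rightarrow> bool" where
  "special_unitary2 U \<longleftrightarrow> unitary2 U \<and> det U = 1"

definition diagonal2 :: "cmat2 \<Rightarrow> bool" where
  "diagonal2 U \<longleftrightarrow> U $ 1 $ 2 = 0 \<and> U $ 2 $ 1 = 0"

definition antidiagonal2 :: "cmat2 \<Rightarrow> bool" where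
  "antidiagonal2 U \<longleftrightarrow> U $ 1 $ 1 = 0 \<and> U $ 2 $ 2 = 0"

datatype 'q gate =
    CGate (ctrl: 'q) (tgt: 'q) (umat: cmat2)
  | SGate (tgt: 'q) (umat: cmat2)

fun wf_gate :: "'q gate \<Rightarrow> bool" where
  "wf_gate (CGate c t U) \<longleftrightarrow> c \<noteq> t \<and> unitary2 U"
| "wf_gate (SGate t U) \<longleftrightarrow> special_unitary2 U"

fun gate_qubits :: "'q gate \<Rightarrow> 'q set" where
  "gate_qubits (CGate c t U) = {c, t}"
| "gate_qubits (SGate t U) = {t}"

fun is_single :: "'q gate \<Rightarrow> bool" where
  "is_single (CGate c t U) = False"
| "is_single (SGate t U) = True"

type_synonym 'q circuit = "'q gate list"

definition circuit_on :: "'q set \<Rightarrow> 'q circuit \<Rightarrow> bool" where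
  "circuit_on R C \<longleftrightarrow> finite R \<and> (\<forall>g\<in>set C. wf_gate g \<and> gate_qubits g \<subseteq> R)"

record 'q packet =
  proot :: 'q
  preg :: "'q set"
  pgates :: "'q gate list"

definition is_packet :: "'q set \<Rightarrow> 'q packet \<Rightarrow> bool" where
  "is_packet R P \<longleftrightarrow>
     finite (preg P) \<and> preg P \<subseteq> R \<and> proot P \<in> preg P \<and>
     (\<forall>g\<in>set (pgates P). wf_gate g \<and> gate_qubits g \<subseteq> preg P) \<and>
     (\<forall>c t U. CGate c t U \<in> set (pgates P) \<longrightarrow> c = proot P) \<and>
     (\<forall>U. SGate (proot P) U \<in> set (pgates P) \<longrightarrow> diagonal2 U \<or> antidiagonal2 U) \<and>
     (\<forall>x\<in>preg P - {proot P}. \<exists>U. CGate (proot P) x U \<in> set (pgates P))"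

definition packing_seq :: "'q set \<Rightarrow> 'q circuit \<Rightarrow> 'q packet list \<Rightarrow> bool" where
  "packing_seq R C \<Omega> \<longleftrightarrow>
     (\<forall>P\<in>set \<Omega>. is_packet R P) \<and>
     (\<exists>ss :: 'q gate list list.
        length ss = Suc (length \<Omega>) \<and>
        (\<forall>s\<in>set ss. \<forall>g\<in>set s. is_single g) \<and>
        C = concat (map (\<lambda>i. ss ! i @ pgates (\<Omega> ! i)) [0..<length \<Omega>]) @ last ss)"

definition dist_cost :: "('q \<Rightarrow> 'l) \<Rightarrow> 'q packet list \<Rightarrow> nat" where
  "dist_cost A \<Omega> = sum_list (map (\<lambda>P. card (A ` preg P) - 1) \<Omega>)"

definition merge_packets :: "'q packet \<Rightarrow> 'q packet \<Rightarrow> 'q packet" where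
  "merge_packets P1 P2 =
     \<lparr> proot = proot P1, preg = preg P1 \<union> preg P2, pgates = pgates P1 @ pgates P2 \<rparr>"

inductive merge_step :: "'q packet list \<Rightarrow> 'q packet list \<Rightarrow> bool" where
  "proot P1 = proot P2 \<Longrightarrow> merge_step (xs @ [P1, P2] @ ys) (xs @ [merge_packets P1 P2] @ ys)"

end

theory Submission
  imports Defs
begin

text \<open>Merging two adjacent packets with a common root \<open>q\<close> replaces the QPU sets
  \<open>\<A>(R\<^sub>1)\<close> and \<open>\<A>(R\<^sub>2)\<close>, which share \<open>\<A>(q)\<close>, by their union; for
  overlapping sets \<open>|X \<union> Y| - 1 \<le> (|X| - 1) + (|Y| - 1)\<close>, so no merge increases the
  cost. Merging keeps every root inside its register, so the bound propagates along
  any sequence of merges.\<close>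

lemma card_Un_diff_one_le:
  assumes "X \<inter> Y \<noteq> {}"
  shows "card (X \<union> Y) - 1 \<le> (card X - 1) + (card Y - 1)"
proof (cases "finite X \<and> finite Y")
  case True
  have "card (X \<union> Y) + card (X \<inter> Y) = card X + card Y"
    using True card_Un_Int[of X Y] by linarith
  moreover have "card (X \<inter> Y) \<ge> 1" "card X \<ge> 1" "card Y \<ge> 1"
    using True assms by (auto simp: Suc_le_eq card_gt_0_iff)
  ultimately show ?thesis by linarith
next
  case False
  then show ?thesis by auto
qed

lemma card_image_merge_packets_le:
  assumes "proot P\<^sub>1 = proot P\<^sub>2" "proot P\<^sub>1 \<in> preg P\<^sub>1" "proot P\<^sub>2 \<in> preg P\<^sub>2"
  shows "card (A ` preg (merge_packets P\<^sub>1 P\<^sub>2)) - 1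
           \<le> (card (A ` preg P\<^sub>1) - 1) + (card (A ` preg P\<^sub>2) - 1)"
proof -
  have "A (proot P\<^sub>1) \<in> A ` preg P\<^sub>1 \<inter> A ` preg P\<^sub>2"
    using assms by simp
  then show ?thesis
    using card_Un_diff_one_le[of "A ` preg P\<^sub>1" "A ` preg P\<^sub>2"]
    by (auto simp: merge_packets_def image_Un)
qed

lemma merge_step_rooted:
  assumes "merge_step \<Omega> \<Gamma>" "\<forall>P\<in>set \<Omega>. proot P \<in> preg P"
  shows "\<forall>P\<in>set \<Gamma>. proot P \<in> preg P"
  using assms by induction (auto simp: merge_packets_def)

lemma merge_steps_rooted:
  assumes "merge_step\<^sup>*\<^sup>* \<Omega> \<Gamma>" "\<forall>P\<in>set \<Omega>. proot P \<in> preg P"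
  shows "\<forall>P\<in>set \<Gamma>. proot P \<in> preg P"
  using assms by induction (auto dest: merge_step_rooted)

lemma merge_step_dist_cost_le:
  assumes "merge_step \<Omega> \<Gamma>" "\<forall>P\<in>set \<Omega>. proot P \<in> preg P"
  shows "dist_cost A \<Gamma> \<le> dist_cost A \<Omega>"
  using assms
proof induction
  case (1 P\<^sub>1 P\<^sub>2 xs ys)
  then have "card (A ` preg (merge_packets P\<^sub>1 P\<^sub>2)) - 1
               \<le> (card (A ` preg P\<^sub>1) - 1) + (card (A ` preg P\<^sub>2) - 1)"
    by (intro card_image_merge_packets_le) auto
  then show ?case by (simp add: dist_cost_def)
qed

lemma merge_steps_dist_cost_le:
  assumes "merge_step\<^sup>*\<^sup>* \<Omega> \<Gamma>" "\<forall>P\<in>set \<Omega>. proot P \<in> preg P"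
  shows "dist_cost A \<Gamma> \<le> dist_cost A \<Omega>"
  using assms
proof (induction rule: rtranclp_induct)
  case base
  then show ?case by simp
next
  case (step \<Gamma>' \<Gamma>)
  have "\<forall>P\<in>set \<Gamma>'. proot P \<in> preg P"
    using merge_steps_rooted step.hyps(1) step.prems by blast
  then have "dist_cost A \<Gamma> \<le> dist_cost A \<Gamma>'"
    using merge_step_dist_cost_le step.hyps(2) by blast
  with step.IH step.prems show ?case by linarith
qed

theorem proposition2:
  fixes R :: "'q set" and C :: "'q circuit"
    and \<Omega> \<Gamma> :: "'q packet list"
  assumes "circuit_on R C"
    and "packing_seq R C \<Omega>"
    and "merge_step\<^sup>*\<^sup>* \<Omega> \<Gamma>"
    and "packing_seq R C \<Gamma>"
    and "length \<Gamma> < length \<Omega>"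
  shows "\<forall>A :: 'q \<Rightarrow> 'l. dist_cost A \<Gamma> \<le> dist_cost A \<Omega>"
proof
  fix A :: "'q \<Rightarrow> 'l"
  have "\<forall>P\<in>set \<Omega>. proot P \<in> preg P"
    using assms(2) by (auto simp: packing_seq_def is_packet_def)
  then show "dist_cost A \<Gamma> \<le> dist_cost A \<Omega>"
    using merge_steps_dist_cost_le assms(3) by blast
qed

end
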